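(* Let $E$ be a strictly convex and reflexive Banach space, let $C\neq\emptyset$ be a closed convex subset of $E$, and let $\mathcal{S}=\{T_s: s\in S\}$ be a representation of a semigroup $S$ on $C$. If $A_C(\mathcal{S})\neq\emptyset$, then $F(\mathcal{S})\neq\emptyset$.
   Context: A representation of a semigroup $S$ on a set $C$ is a family $\{T_s:s\in S\}$ of maps $T_s:C\to C$ with $T_{st}=T_s\circ T_t$ for all $s,t\in S$ (no continuity or nonexpansiveness is assumed). A point $a\in E$ is an attractive point of $\mathcal{S}$ for $C$ if $\|a-T_sx\|\le\|a-x\|$ for all $x\in C$ and all $s\in S$; $A_C(\mathcal{S})$ denotes the set of all such points. $F(\mathcal{S})$ denotes the set of common fixed points, i.e. $x\in C$ with $T_sx=x$ for all $s\in S$. *)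

theory Defs
  imports "HOL-Analysis.Analysis"
begin

definition strictly_convex_space :: "'a::real_normed_vector itself \<Rightarrow> bool" where
  "strictly_convex_space (_::'a itself) \<longleftrightarrow>
     (\<forall>x y::'a. norm x = 1 \<and> norm y = 1 \<and> x \<noteq> y \<longrightarrow> norm ((1/2) *\<^sub>R (x + y)) < 1)"

text \<open>Reflexivity: the canonical embedding of E into its bidual E** is surjective.
  The dual of E is the type of bounded linear functionals to real.\<close>
definition reflexive_space :: "'a::real_normed_vector itself \<Rightarrow> bool" where
  "reflexive_space (_::'a itself) \<longleftrightarrow>
     (\<forall>\<phi> :: ('a \<Rightarrow>\<^sub>L real) \<Rightarrow>\<^sub>L real. \<exists>x::'a. \<forall>f. blinfun_apply \<phi> f = blinfun_apply f x)"

definition representation_on :: "'a set \<Rightarrow> ('s::semigroup_mult \<Rightarrow> 'a \<Rightarrow> 'a) \<Rightarrow> bool" where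
  "representation_on C T \<longleftrightarrow>
     (\<forall>s. \<forall>x\<in>C. T s x \<in> C) \<and> (\<forall>s t. \<forall>x\<in>C. T (s * t) x = T s (T t x))"

definition attractive_points :: "'a::real_normed_vector set \<Rightarrow> ('s \<Rightarrow> 'a \<Rightarrow> 'a) \<Rightarrow> 'a set" where
  "attractive_points C T = {a. \<forall>x\<in>C. \<forall>s. norm (a - T s x) \<le> norm (a - x)}"

definition common_fixed_points :: "'a set \<Rightarrow> ('s \<Rightarrow> 'a \<Rightarrow> 'a) \<Rightarrow> 'a set" where
  "common_fixed_points C T = {x\<in>C. \<forall>s. T s x = x}"

end

theory Submission
  imports Defs
begin

text \<open>Let a be an attractive point. In a reflexive space the closed convex set C contains a point z
  nearest to a, and strict convexity makes it unique. Each T s maps C into C and does not increase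
  the distance to a, so T s z is nearest to a as well, hence T s z = z.

  The nearest point comes from a minimising sequence (x n): Hahn-Banach applied to the sublinear
  functional f \<mapsto> limsup f (x n) on the dual yields an element of the bidual, i.e. by reflexivity a
  point y with f y \<le> limsup f (x n) for all f, and the separation theorem puts y into every closed
  convex set containing a tail of the sequence. Hahn-Banach itself follows from Zorn's lemma,
  because a minimal sublinear minorant of a sublinear functional is linear.\<close>

definition sublinear :: "('v::real_vector \<Rightarrow> real) \<Rightarrow> bool" where
  "sublinear p \<longleftrightarrow> (\<forall>x y. p (x + y) \<le> p x + p y) \<and> (\<forall>c x. 0 \<le> c \<longrightarrow> p (c *\<^sub>R x) = c * p x)"

lemma sublinear_add: "sublinear p \<Longrightarrow> p (x + y) \<le> p x + p y"
  by (simp add: sublinear_def)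

lemma sublinear_scaleR: "sublinear p \<Longrightarrow> 0 \<le> c \<Longrightarrow> p (c *\<^sub>R x) = c * p x"
  by (simp add: sublinear_def)

lemma sublinear_zero: "sublinear p \<Longrightarrow> p 0 = 0"
  using sublinear_scaleR[of p 0 0] by simp

lemma sublinear_neg_le: "sublinear p \<Longrightarrow> - p (- x) \<le> p x"
  using sublinear_add[of p x "- x"] sublinear_zero[of p] by simp

lemma sublinearI:
  assumes add: "\<And>x y. p (x + y) \<le> p x + p y"
    and scale: "\<And>c x. 0 < c \<Longrightarrow> p (c *\<^sub>R x) \<le> c * p x"
    and zero: "p 0 \<le> 0"
  shows "sublinear p"
proof -
  have "p (c *\<^sub>R x) = c * p x" if c: "0 < c" for c x
  proof (rule antisym)
    show "p (c *\<^sub>R x) \<le> c * p x" using scale[OF c] .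
    have "p x \<le> inverse c * p (c *\<^sub>R x)"
      using scale[of "inverse c" "c *\<^sub>R x"] c by simp
    then show "c * p x \<le> p (c *\<^sub>R x)"
      using c by (simp add: field_simps)
  qed
  moreover have "p 0 = 0"
    using add[of 0 0] zero by simp
  ultimately show ?thesis
    unfolding sublinear_def using add by (metis order_le_less scaleR_zero_left mult_zero_left)
qed

lemma sublinear_INF_chain:
  fixes Q :: "('v::real_vector \<Rightarrow> real) set"
  assumes "Q \<noteq> {}"
    and sublinear: "\<And>q. q \<in> Q \<Longrightarrow> sublinear q"
    and chain: "\<And>q q'. q \<in> Q \<Longrightarrow> q' \<in> Q \<Longrightarrow> q \<le> q' \<or> q' \<le> q"
    and bdd: "\<And>x. bdd_below ((\<lambda>q. q x) ` Q)"
  shows "sublinear (\<lambda>x. INF q\<in>Q. q x)" (is "sublinear ?u")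
proof (rule sublinearI)
  have lower: "?u x \<le> q x" if "q \<in> Q" for q x
    using that bdd by (intro cINF_lower)
  have greatest: "b \<le> ?u x" if "\<And>q. q \<in> Q \<Longrightarrow> b \<le> q x" for b x
    using that \<open>Q \<noteq> {}\<close> by (intro cINF_greatest)
  show "?u (x + y) \<le> ?u x + ?u y" for x y
  proof -
    have "?u (x + y) - q' y \<le> q x" if qq': "q \<in> Q" "q' \<in> Q" for q q'
    proof -
      \<comment> \<open>Both values are bounded by the smaller of the two functionals, which is subadditive.\<close>
      obtain q'' where "q'' \<in> Q" "q'' \<le> q" "q'' \<le> q'"
        using chain[OF qq'] qq' by auto
      then show ?thesis
        using lower[of q'' "x + y"] sublinear_add[OF sublinear, of q'' x y]
          le_funD[of q'' q x] le_funD[of q'' q' y] by linarith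
    qed
    then have "?u (x + y) - q' y \<le> ?u x" if "q' \<in> Q" for q'
      using that by (intro greatest) auto
    then have "?u (x + y) - ?u x \<le> ?u y"
      by (intro greatest) (auto simp: algebra_simps)
    then show ?thesis by simp
  qed
  show "?u (c *\<^sub>R x) \<le> c * ?u x" if "0 < c" for c x
  proof -
    have "?u (c *\<^sub>R x) / c \<le> ?u x"
      using that lower sublinear_scaleR[OF sublinear]
      by (intro greatest) (simp add: field_simps)
    then show ?thesis using that by (simp add: field_simps)
  qed
  obtain q where "q \<in> Q" using \<open>Q \<noteq> {}\<close> by blast
  then show "?u 0 \<le> 0"
    using lower[of q 0] sublinear_zero[OF sublinear[of q]] by simp
qed

lemma sublinear_SUP_linear:
  assumes "I \<noteq> {}"
    and linear: "\<And>i. i \<in> I \<Longrightarrow> linear (g i)"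
    and bdd: "\<And>x. bdd_above ((\<lambda>i. g i x) ` I)"
  shows "sublinear (\<lambda>x. SUP i\<in>I. g i x)" (is "sublinear ?s")
proof (rule sublinearI)
  have upper: "g i x \<le> ?s x" if "i \<in> I" for i x
    using that bdd by (intro cSUP_upper)
  show "?s (x + y) \<le> ?s x + ?s y" for x y
  proof (rule cSUP_least)
    fix i assume "i \<in> I"
    then show "g i (x + y) \<le> ?s x + ?s y"
      using upper linear_add[OF linear] by (simp add: add_mono)
  qed (use \<open>I \<noteq> {}\<close> in simp)
  show "?s (c *\<^sub>R x) \<le> c * ?s x" if "0 < c" for c x
  proof (rule cSUP_least)
    fix i assume "i \<in> I"
    then show "g i (c *\<^sub>R x) \<le> c * ?s x"
      using upper linear_scale[OF linear] that by simp
  qed (use \<open>I \<noteq> {}\<close> in simp)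
  show "?s 0 \<le> 0"
    using \<open>I \<noteq> {}\<close> linear_0[OF linear] by (intro cSUP_least) auto
qed

definition sublinear_shift :: "('v::real_vector \<Rightarrow> real) \<Rightarrow> 'v \<Rightarrow> 'v \<Rightarrow> real" where
  "sublinear_shift q y x = (INF t\<in>{0..}. q (x + t *\<^sub>R y) - t * q y)"

lemma sublinear_shift_le:
  assumes q: "sublinear q" and "0 \<le> t"
  shows "sublinear_shift q y x \<le> q (x + t *\<^sub>R y) - t * q y"
proof -
  have "- q (- x) \<le> q (x + s *\<^sub>R y) - s * q y" if "0 \<le> s" for s
    using sublinear_add[OF q, of "x + s *\<^sub>R y" "- x"] sublinear_scaleR[OF q that] by simp
  then have "bdd_below ((\<lambda>s. q (x + s *\<^sub>R y) - s * q y) ` {0..})"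
    by (intro bdd_belowI2) auto
  then show ?thesis
    unfolding sublinear_shift_def using \<open>0 \<le> t\<close> by (intro cINF_lower) auto
qed

lemma le_sublinear_shift:
  assumes "\<And>t. 0 \<le> t \<Longrightarrow> b \<le> q (x + t *\<^sub>R y) - t * q y"
  shows "b \<le> sublinear_shift q y x"
  unfolding sublinear_shift_def using assms by (intro cINF_greatest) auto

lemma sublinear_sublinear_shift:
  assumes q: "sublinear q"
  shows "sublinear (sublinear_shift q y)" (is "sublinear ?r")
proof (rule sublinearI)
  show "?r (x + x') \<le> ?r x + ?r x'" for x x'
  proof -
    have "?r (x + x') - (q (x' + t *\<^sub>R y) - t * q y) \<le> ?r x" if t: "0 \<le> t" for t
    proof (rule le_sublinear_shift)
      fix s :: real
      assume s: "0 \<le> s"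
      have "?r (x + x') \<le> q (x + x' + (s + t) *\<^sub>R y) - (s + t) * q y"
        using sublinear_shift_le[OF q] s t by simp
      also have "q (x + x' + (s + t) *\<^sub>R y) \<le> q (x + s *\<^sub>R y) + q (x' + t *\<^sub>R y)"
        using sublinear_add[OF q, of "x + s *\<^sub>R y" "x' + t *\<^sub>R y"] by (simp add: algebra_simps)
      finally show "?r (x + x') - (q (x' + t *\<^sub>R y) - t * q y) \<le> q (x + s *\<^sub>R y) - s * q y"
        by (simp add: algebra_simps)
    qed
    then have "?r (x + x') - ?r x \<le> ?r x'"
      by (intro le_sublinear_shift) (auto simp: algebra_simps)
    then show ?thesis by simp
  qed
  show "?r (c *\<^sub>R x) \<le> c * ?r x" if c: "0 < c" for c x
  proof -
    have "?r (c *\<^sub>R x) / c \<le> ?r x"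
    proof (rule le_sublinear_shift)
      fix t :: real
      assume t: "0 \<le> t"
      have "?r (c *\<^sub>R x) \<le> q (c *\<^sub>R x + (c * t) *\<^sub>R y) - (c * t) * q y"
        using sublinear_shift_le[OF q] c t by simp
      also have "q (c *\<^sub>R x + (c * t) *\<^sub>R y) = c * q (x + t *\<^sub>R y)"
        using sublinear_scaleR[OF q, of c "x + t *\<^sub>R y"] c by (simp add: scaleR_add_right)
      finally show "?r (c *\<^sub>R x) / c \<le> q (x + t *\<^sub>R y) - t * q y"
        using c by (simp add: field_simps)
    qed
    then show ?thesis using c by (simp add: field_simps)
  qed
  show "?r 0 \<le> 0"
    using sublinear_shift_le[OF q, where t = 0 and x = 0] sublinear_zero[OF q] by simp
qed

lemma sublinear_shift_le_self: "sublinear q \<Longrightarrow> sublinear_shift q y \<le> q"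
  using sublinear_shift_le[of q 0] by (simp add: le_fun_def)

lemma sublinear_shift_neg: "sublinear q \<Longrightarrow> sublinear_shift q y (- y) \<le> - q y"
  using sublinear_shift_le[of q 1 y "- y"] sublinear_zero[of q] by simp

lemma minimal_sublinear_imp_linear:
  assumes m: "sublinear m"
    and minimal: "\<And>r. sublinear r \<Longrightarrow> r \<le> m \<Longrightarrow> r = m"
  shows "linear m"
proof -
  have neg: "m (- y) = - m y" for y
  proof -
    have "sublinear_shift m y = m"
      using minimal sublinear_sublinear_shift[OF m] sublinear_shift_le_self[OF m] by blast
    then have "m (- y) \<le> - m y"
      using sublinear_shift_neg[OF m, of y] by simp
    with sublinear_neg_le[OF m, of "- y"] show ?thesis by simp
  qed
  show ?thesis
  proof (rule linearI)
    show "m (x + y) = m x + m y" for x y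
      using sublinear_add[OF m, of x y] sublinear_add[OF m, of "- x" "- y"] neg[of "x + y"] neg[of x] neg[of y]
      by (simp add: algebra_simps)
    show "m (c *\<^sub>R x) = c *\<^sub>R m x" for c x
      using sublinear_scaleR[OF m, of c x] sublinear_scaleR[OF m, of "- c" x] neg[of "(- c) *\<^sub>R x"]
      by (cases "0 \<le> c") auto
  qed
qed

lemma sublinear_minimal_minorant_exists:
  fixes p :: "'v::real_vector \<Rightarrow> real"
  assumes p: "sublinear p"
  shows "\<exists>m. sublinear m \<and> m \<le> p \<and> (\<forall>r. sublinear r \<and> r \<le> m \<longrightarrow> r = m)"
proof -
  define A where "A = {q::'v \<Rightarrow> real. sublinear q \<and> q \<le> p}"
  have po: "partial_order_on A (relation_of (\<ge>) A)"
    by (rule partial_order_on_relation_ofI) auto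
  have "\<exists>u\<in>A. \<forall>q\<in>Q. u \<le> q" if Q: "Q \<in> Chains (relation_of (\<ge>) A)" for Q
  proof (cases "Q = {}")
    case True
    then show ?thesis using p by (auto simp: A_def)
  next
    case False
    have QA: "Q \<subseteq> A"
      using Chains_relation_of[OF Q] .
    have chain: "q \<le> q' \<or> q' \<le> q" if "q \<in> Q" "q' \<in> Q" for q q'
      using Q that unfolding Chains_def relation_of_def by auto
    have bdd: "bdd_below ((\<lambda>q. q x) ` Q)" for x
    proof (rule bdd_belowI2)
      fix q
      assume "q \<in> Q"
      then have "sublinear q" "q (- x) \<le> p (- x)"
        using QA by (auto simp: A_def le_fun_def)
      then show "- p (- x) \<le> q x"
        using sublinear_neg_le[of q x] by simp
    qed
    define u where "u x = (INF q\<in>Q. q x)" for x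
    have "sublinear u"
      unfolding u_def using False QA chain bdd by (intro sublinear_INF_chain) (auto simp: A_def)
    moreover have lower: "u \<le> q" if "q \<in> Q" for q
      unfolding u_def le_fun_def using that bdd by (auto intro: cINF_lower)
    moreover obtain q where "q \<in> Q"
      using False by blast
    ultimately have "u \<in> A"
      using QA by (auto simp: A_def intro: order_trans)
    with lower show ?thesis by blast
  qed
  from predicate_Zorn[OF po this] obtain m where "m \<in> A" and "\<forall>q\<in>A. q \<le> m \<longrightarrow> q = m"
    by blast
  then show ?thesis
    by (auto simp: A_def intro: order_trans)
qed

lemma sublinear_has_linear_minorant:
  assumes "sublinear p"
  shows "\<exists>F. linear F \<and> F \<le> p"
  using sublinear_minimal_minorant_exists[OF assms] minimal_sublinear_imp_linear by blast

lemma sublinear_has_supporting_linear_minorant: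
  fixes p :: "'v::real_vector \<Rightarrow> real"
  assumes p: "sublinear p"
  shows "\<exists>F. linear F \<and> F \<le> p \<and> F z = p z"
proof -
  define r where "r = sublinear_shift p z"
  have r: "sublinear r" "r \<le> p" "r (- z) \<le> - p z"
    unfolding r_def using p by (simp_all add: sublinear_sublinear_shift sublinear_shift_le_self sublinear_shift_neg)
  obtain F where F: "linear F" "F \<le> r"
    using sublinear_has_linear_minorant[OF r(1)] by blast
  have "F \<le> p"
    using F(2) r(2) by (rule order_trans)
  moreover have "p z \<le> F z"
    using le_funD[OF F(2), of "- z"] r(3) linear_neg[OF F(1), of z] by simp
  ultimately show ?thesis
    using F(1) le_funD[of F p z] by (intro exI[of _ F]) auto
qed

lemma linear_le_norm_imp_bounded_linear:
  assumes F: "linear F" and le: "\<And>x. F x \<le> M * norm x"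
  shows "bounded_linear F"
proof (rule bounded_linear_intro[where K = M])
  show "norm (F x) \<le> norm x * M" for x
    using le[of x] le[of "- x"] linear_neg[OF F, of x] by (simp add: abs_le_iff mult.commute)
qed (use F in \<open>simp_all add: linear_add linear_scale\<close>)

lemma sublinear_infdist_convex_cone:
  fixes K :: "'a::real_normed_vector set"
  assumes K: "convex_cone K"
  shows "sublinear (\<lambda>x. infdist x K)"
proof (rule sublinearI)
  have greatest: "b \<le> infdist x K" if "\<And>k. k \<in> K \<Longrightarrow> b \<le> dist x k" for b x
    using that convex_cone_nonempty[OF K] by (simp add: infdist_notempty cINF_greatest)
  show "infdist (x + y) K \<le> infdist x K + infdist y K" for x y
  proof -
    have "infdist (x + y) K - dist y k' \<le> infdist x K" if "k' \<in> K" for k'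
    proof (rule greatest)
      fix k
      assume "k \<in> K"
      then have "infdist (x + y) K \<le> dist (x + y) (k + k')"
        using convex_cone_add[OF K _ \<open>k' \<in> K\<close>] by (intro infdist_le)
      also have "\<dots> \<le> dist x k + dist y k'"
        by (rule dist_triangle_add)
      finally show "infdist (x + y) K - dist y k' \<le> dist x k" by simp
    qed
    then have "infdist (x + y) K - infdist x K \<le> infdist y K"
      by (intro greatest) (auto simp: algebra_simps)
    then show ?thesis by simp
  qed
  show "infdist (c *\<^sub>R x) K \<le> c * infdist x K" if c: "0 < c" for c x
  proof -
    have "infdist (c *\<^sub>R x) K / c \<le> infdist x K"
    proof (rule greatest)
      fix k
      assume "k \<in> K"
      then have "infdist (c *\<^sub>R x) K \<le> dist (c *\<^sub>R x) (c *\<^sub>R k)"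
        using convex_cone_scaleR[OF K] c by (intro infdist_le) simp
      also have "\<dots> = c * dist x k"
        using c by (simp add: dist_norm flip: scaleR_diff_right)
      finally show "infdist (c *\<^sub>R x) K / c \<le> dist x k"
        using c by (simp add: field_simps)
    qed
    then show ?thesis using c by (simp add: field_simps)
  qed
  show "infdist 0 K \<le> 0"
    using convex_cone_contains_0[OF K] by simp
qed

definition thickened_cone :: "'a::real_normed_vector set \<Rightarrow> real \<Rightarrow> 'a \<Rightarrow> 'a set" where
  "thickened_cone C r x0 = convex_cone hull ((\<lambda>v. v - x0) ` (\<Union>c\<in>C. \<Union>w\<in>cball 0 r. {c + w}))"

lemma mem_thickened_cone_iff:
  fixes C :: "'a::real_normed_vector set"
  assumes "convex C" "C \<noteq> {}" "0 \<le> r"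
  shows "k \<in> thickened_cone C r x0 \<longleftrightarrow> (\<exists>t c w. 0 \<le> t \<and> c \<in> C \<and> norm w \<le> r \<and> k = t *\<^sub>R (c + w - x0))"
proof -
  define D where "D = (\<lambda>v. v - x0) ` (\<Union>c\<in>C. \<Union>w\<in>cball 0 r. {c + w})"
  have "convex D"
    unfolding D_def using assms(1) by (intro convex_translation_subtract convex_sums convex_cball)
  have D_iff: "v \<in> D \<longleftrightarrow> (\<exists>c w. c \<in> C \<and> norm w \<le> r \<and> v = c + w - x0)" for v
    by (force simp: D_def image_iff)
  obtain c where "c \<in> C"
    using assms(2) by blast
  then have "D \<noteq> {}"
    using assms(3) D_iff[of "c + 0 - x0"] by auto
  then have "k \<in> thickened_cone C r x0 \<longleftrightarrow> (\<exists>t\<ge>0. \<exists>v\<in>D. k = t *\<^sub>R v)"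
    unfolding thickened_cone_def D_def[symmetric] convex_cone_hull_convex_hull_nonempty[OF \<open>D \<noteq> {}\<close>]
      convex_hull_eq[THEN iffD2, OF \<open>convex D\<close>]
    by auto
  then show ?thesis
    unfolding Bex_def D_iff by blast
qed

lemma infdist_le_infdist_thickened_cone:
  fixes C :: "'a::real_normed_vector set"
  assumes C: "convex C" "c0 \<in> C"
  shows "infdist x0 C \<le> infdist (x0 - c0) (thickened_cone C (infdist x0 C / 2) x0)"
proof -
  define d where "d = infdist x0 C"
  define K where "K = thickened_cone C (d / 2) x0"
  have K_iff: "k \<in> K \<longleftrightarrow> (\<exists>t c w. 0 \<le> t \<and> c \<in> C \<and> norm w \<le> d / 2 \<and> k = t *\<^sub>R (c + w - x0))" for k
    unfolding K_def using C by (intro mem_thickened_cone_iff) (auto simp: d_def infdist_nonneg)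
  have "0 \<in> K"
    unfolding K_iff using C(2) infdist_nonneg[of x0 C]
    by (intro exI[of _ 0] exI[of _ c0] exI[of _ 0]) (simp add: d_def)
  then have "K \<noteq> {}"
    by blast
  have "d \<le> norm (x0 - c0 - t *\<^sub>R (c + w - x0))" if "0 \<le> t" "c \<in> C" "norm w \<le> d / 2" for t c w
  proof -
    \<comment> \<open>Regroup around the point c' of C on the segment from c0 to c.\<close>
    define c' where "c' = (1 / (1 + t)) *\<^sub>R c0 + (t / (1 + t)) *\<^sub>R c"
    have "c' \<in> C"
      unfolding c'_def using C that by (intro convexD) (auto simp: add_divide_distrib [symmetric])
    then have "(1 + t) * d \<le> (1 + t) * norm (x0 - c')"
      using that infdist_le[of c' C x0] by (intro mult_left_mono) (auto simp: d_def dist_norm)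
    moreover have "(1 + t) *\<^sub>R c' = c0 + t *\<^sub>R c"
      using that by (simp add: c'_def scaleR_add_right divide_simps)
    then have "x0 - c0 - t *\<^sub>R (c + w - x0) = (1 + t) *\<^sub>R (x0 - c') - t *\<^sub>R w"
      by (simp add: algebra_simps)
    then have "(1 + t) * norm (x0 - c') - t * norm w \<le> norm (x0 - c0 - t *\<^sub>R (c + w - x0))"
      using that norm_triangle_ineq2[of "(1 + t) *\<^sub>R (x0 - c')" "t *\<^sub>R w"] by simp
    moreover have "t * norm w \<le> t * (d / 2)"
      using that by (intro mult_left_mono) auto
    moreover have "0 \<le> t * d"
      using that by (simp add: d_def infdist_nonneg)
    ultimately show ?thesis
      by (simp add: algebra_simps)
  qed
  then have "d \<le> infdist (x0 - c0) K"
    unfolding infdist_notempty[OF \<open>K \<noteq> {}\<close>] using \<open>K \<noteq> {}\<close>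
    by (intro cINF_greatest) (auto simp: K_iff dist_norm)
  then show ?thesis
    by (simp add: d_def K_def)
qed

lemma convex_cone_supporting_functional:
  fixes K :: "'a::real_normed_vector set"
  assumes K: "convex_cone K"
  shows "\<exists>f::'a \<Rightarrow>\<^sub>L real. (\<forall>k\<in>K. f k \<le> 0) \<and> f z = infdist z K"
proof -
  obtain F where F: "linear F" "\<And>v. F v \<le> infdist v K" "F z = infdist z K"
    using sublinear_has_supporting_linear_minorant[OF sublinear_infdist_convex_cone[OF K]]
    by (auto simp: le_fun_def)
  have "F v \<le> 1 * norm v" for v
    using F(2)[of v] infdist_le[OF convex_cone_contains_0[OF K], of v] by simp
  then have "bounded_linear F"
    using F(1) by (rule linear_le_norm_imp_bounded_linear[rotated])
  moreover have "F k \<le> 0" if "k \<in> K" for k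
    using F(2)[of k] that by simp
  ultimately show ?thesis
    using F(3) bounded_linear_Blinfun_apply[of F] by (intro exI[of _ "Blinfun F"]) auto
qed

lemma closed_convex_separation:
  fixes C :: "'a::real_normed_vector set"
  assumes C: "closed C" "convex C" "C \<noteq> {}" and x0: "x0 \<notin> C"
  shows "\<exists>f::'a \<Rightarrow>\<^sub>L real. \<exists>e>0. \<forall>c\<in>C. f c \<le> f x0 - e"
proof -
  define d where "d = infdist x0 C"
  have d: "0 < d"
    using in_closed_iff_infdist_zero[OF C(1,3), of x0] x0 infdist_nonneg[of x0 C]
    by (simp add: d_def)
  obtain c0 where c0: "c0 \<in> C"
    using C(3) by blast
  define z where "z = x0 - c0"
  have z: "z \<noteq> 0"
    using c0 x0 by (auto simp: z_def)
  \<comment> \<open>A functional supporting K at z is nonpositive on C + cball 0 (d / 2) - x0 but positive at z;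
    evaluating it on the ball gives the margin e.\<close>
  define K where "K = thickened_cone C (d / 2) x0"
  have "d \<le> infdist z K"
    using infdist_le_infdist_thickened_cone[OF C(2) c0] by (simp add: d_def z_def K_def)
  obtain f :: "'a \<Rightarrow>\<^sub>L real" where f: "\<And>k. k \<in> K \<Longrightarrow> f k \<le> 0" "f z = infdist z K"
    using convex_cone_supporting_functional[of K z]
    by (auto simp: K_def thickened_cone_def convex_cone_convex_cone_hull)
  define e where "e = d / 2 / norm z * d"
  have "f c \<le> f x0 - e" if "c \<in> C" for c
  proof -
    define w where "w = (d / 2 / norm z) *\<^sub>R z"
    have "norm w \<le> d / 2"
      using d z by (simp add: w_def)
    then have "c + w - x0 \<in> K"
      unfolding K_def using mem_thickened_cone_iff[OF C(2,3)] that d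
      by (metis less_eq_real_def half_gt_zero scaleR_one zero_le_one)
    then have "f (c + w - x0) \<le> 0"
      by (rule f(1))
    then have "f c + f w - f x0 \<le> 0"
      by (simp add: blinfun.add_right blinfun.diff_right)
    moreover have "e \<le> f w"
      unfolding e_def w_def blinfun.scaleR_right using \<open>d \<le> infdist z K\<close> f(2) d
      by (simp add: mult_left_mono divide_right_mono)
    ultimately show ?thesis by simp
  qed
  moreover have "0 < e"
    using d z by (simp add: e_def)
  ultimately show ?thesis by blast
qed

lemma reflexive_space_bounded_sequence_limsup_point:
  fixes x :: "nat \<Rightarrow> 'a::real_normed_vector"
  assumes reflexive: "reflexive_space TYPE('a)" and bounded: "\<And>n. norm (x n) \<le> M"
  shows "\<exists>y. \<forall>(f::'a \<Rightarrow>\<^sub>L real) m. f y \<le> (SUP n\<in>{m..}. f (x n))"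
proof -
  define s where "s m f = (SUP n\<in>{m..}. blinfun_apply f (x n))" for m and f :: "'a \<Rightarrow>\<^sub>L real"
  have bound: "\<bar>f (x n)\<bar> \<le> norm f * M" for f :: "'a \<Rightarrow>\<^sub>L real" and n
    using norm_blinfun[of f "x n"] bounded[of n] by (simp add: order_trans mult_left_mono)
  then have bdd: "bdd_above ((\<lambda>n. f (x n)) ` {m..})" for f :: "'a \<Rightarrow>\<^sub>L real" and m
    by (intro bdd_aboveI2[where M = "norm f * M"]) (simp add: abs_le_iff)
  have upper: "f (x n) \<le> s m f" if "m \<le> n" for f :: "'a \<Rightarrow>\<^sub>L real" and m n
    unfolding s_def using that bdd by (intro cSUP_upper) auto
  have least: "s m f \<le> b" if "\<And>n. m \<le> n \<Longrightarrow> f (x n) \<le> b" for f :: "'a \<Rightarrow>\<^sub>L real" and m b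
    unfolding s_def using that by (intro cSUP_least) auto
  have lower: "- (norm f * M) \<le> s m f" for f m
    using upper[where m = m and n = m and f = f] bound[of f m] by (simp add: abs_le_iff)
  have "sublinear (s m)" for m
    unfolding s_def[abs_def] using bdd by (intro sublinear_SUP_linear) (auto intro: bounded_linear.linear)
  moreover have "s m \<le> s m' \<or> s m' \<le> s m" for m m'
    using upper least by (metis le_funI nat_le_linear order_trans)
  moreover have "bdd_below ((\<lambda>q. q f) ` range s)" for f :: "'a \<Rightarrow>\<^sub>L real"
    using lower by (intro bdd_belowI2[where m = "- (norm f * M)"]) auto
  ultimately have "sublinear (\<lambda>f. INF q\<in>range s. q f)" (is "sublinear ?p")
    by (intro sublinear_INF_chain) auto
  then obtain \<phi> where \<phi>: "linear \<phi>" "\<phi> \<le> ?p"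
    using sublinear_has_linear_minorant by blast
  have p_le: "?p f \<le> s m f" for f m
    using \<open>\<And>f. bdd_below ((\<lambda>q. q f) ` range s)\<close> by (intro cINF_lower) auto
  have "\<phi> f \<le> M * norm f" for f
    using le_funD[OF \<phi>(2), of f] p_le[of f 0] least[of 0 f "norm f * M"] bound
    by (force simp: abs_le_iff mult.commute)
  then have "bounded_linear \<phi>"
    using \<phi>(1) by (rule linear_le_norm_imp_bounded_linear[rotated])
  then obtain y where y: "\<And>f. \<phi> f = blinfun_apply f y"
    using reflexive bounded_linear_Blinfun_apply unfolding reflexive_space_def by metis
  have "f y \<le> s m f" for f :: "'a \<Rightarrow>\<^sub>L real" and m
    using le_funD[OF \<phi>(2), of f] p_le[of f m] y[of f] by simp
  then show ?thesis
    unfolding s_def by blast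
qed

lemma limsup_point_mem_closed_convex:
  fixes x :: "nat \<Rightarrow> 'a::real_normed_vector"
  assumes y: "\<And>f::'a \<Rightarrow>\<^sub>L real. f y \<le> (SUP n\<in>{m..}. f (x n))"
    and K: "closed K" "convex K" and tail: "\<And>n. m \<le> n \<Longrightarrow> x n \<in> K"
  shows "y \<in> K"
proof (rule ccontr)
  assume "y \<notin> K"
  moreover have "K \<noteq> {}"
    using tail by blast
  ultimately obtain f :: "'a \<Rightarrow>\<^sub>L real" and e where "0 < e" and f: "\<And>c. c \<in> K \<Longrightarrow> f c \<le> f y - e"
    using closed_convex_separation[OF K] by blast
  then have "(SUP n\<in>{m..}. f (x n)) \<le> f y - e"
    using tail by (intro cSUP_least) auto
  with y[of f] \<open>0 < e\<close> show False by simp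
qed

lemma reflexive_space_nearest_point_exists:
  fixes C :: "'a::real_normed_vector set"
  assumes reflexive: "reflexive_space TYPE('a)" and C: "closed C" "convex C" "C \<noteq> {}"
  shows "\<exists>z\<in>C. \<forall>c\<in>C. norm (a - z) \<le> norm (a - c)"
proof -
  define d where "d = infdist a C"
  have "\<exists>c\<in>C. norm (a - c) < d + 1 / real (Suc n)" for n
    using cINF_less_iff[OF C(3) bdd_below_image_dist, of a "d + 1 / real (Suc n)"]
    by (simp add: d_def infdist_notempty[OF C(3)] dist_norm)
  then obtain x where x: "\<And>n. x n \<in> C" "\<And>n. norm (a - x n) < d + 1 / real (Suc n)"
    by metis
  have "norm (x n) \<le> norm a + (d + 1)" for n
  proof -
    have "norm (x n) \<le> norm a + norm (a - x n)"
      using norm_triangle_ineq4[of a "a - x n"] by simp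
    moreover have "1 / real (Suc n) \<le> 1"
      by simp
    ultimately show ?thesis
      using x(2)[of n] by linarith
  qed
  then obtain y where y: "\<And>(f::'a \<Rightarrow>\<^sub>L real) m. f y \<le> (SUP n\<in>{m..}. f (x n))"
    using reflexive_space_bounded_sequence_limsup_point[OF reflexive] by blast
  have y_mem: "y \<in> C \<inter> cball a (d + 1 / real (Suc m))" for m
  proof (rule limsup_point_mem_closed_convex[OF y])
    show "x n \<in> C \<inter> cball a (d + 1 / real (Suc m))" if "m \<le> n" for n
    proof -
      have "1 / real (Suc n) \<le> 1 / real (Suc m)"
        using that by (simp add: frac_le)
      then show ?thesis
        using x[of n] by (simp add: dist_norm)
    qed
  qed (use C in \<open>auto intro: closed_Int convex_Int\<close>)
  have "norm (a - y) \<le> d"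
  proof (rule field_le_epsilon)
    fix e :: real
    assume "0 < e"
    then obtain m where "1 / real (Suc m) < e"
      using nat_approx_posE by metis
    then show "norm (a - y) \<le> d + e"
      using y_mem[of m] by (simp add: dist_norm)
  qed
  moreover have "d \<le> norm (a - c)" if "c \<in> C" for c
    using infdist_le[OF that, of a] by (simp add: d_def dist_norm)
  ultimately show ?thesis
    using y_mem[of 0] by (meson IntD1 order_trans)
qed

lemma strictly_convex_space_norm_midpoint_less:
  fixes u v :: "'a::real_normed_vector"
  assumes sc: "strictly_convex_space TYPE('a)" and norms: "norm u = r" "norm v = r" and "u \<noteq> v"
  shows "norm (midpoint u v) < r"
proof -
  have r: "0 < r"
    using norms \<open>u \<noteq> v\<close> by (metis norm_eq_zero norm_ge_zero order_le_less)
  have "norm ((1 / 2) *\<^sub>R ((1 / r) *\<^sub>R u + (1 / r) *\<^sub>R v)) < 1"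
    using sc norms r \<open>u \<noteq> v\<close> unfolding strictly_convex_space_def by simp
  also have "(1 / 2) *\<^sub>R ((1 / r) *\<^sub>R u + (1 / r) *\<^sub>R v) = (1 / r) *\<^sub>R midpoint u v"
    by (simp add: midpoint_def scaleR_add_right inverse_eq_divide mult.commute)
  finally show ?thesis
    using r by simp
qed

lemma strictly_convex_space_nearest_point_unique:
  fixes C :: "'a::real_normed_vector set"
  assumes sc: "strictly_convex_space TYPE('a)" and "convex C"
    and y: "y \<in> C" "\<forall>c\<in>C. norm (a - y) \<le> norm (a - c)"
    and z: "z \<in> C" "norm (a - z) \<le> norm (a - y)"
  shows "z = y"
proof (rule ccontr)
  assume "z \<noteq> y"
  have "midpoint y z \<in> C"
    using \<open>convex C\<close> y(1) z(1) midpoint_in_closed_segment convex_contains_segment by blast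
  moreover have "norm (a - midpoint y z) < norm (a - y)"
  proof -
    have "midpoint (a - y) (a - z) = a - midpoint y z"
      by (simp add: midpoint_def algebra_simps flip: scaleR_add_left)
    moreover have "norm (a - z) = norm (a - y)"
      using y z by (simp add: order_antisym)
    ultimately show ?thesis
      using strictly_convex_space_norm_midpoint_less[OF sc] \<open>z \<noteq> y\<close> by fastforce
  qed
  ultimately show False
    using y(2) by fastforce
qed

theorem lemma3p1:
  fixes C :: "'a::banach set" and T :: "'s::semigroup_mult \<Rightarrow> 'a \<Rightarrow> 'a"
  assumes "strictly_convex_space TYPE('a)"
    and "reflexive_space TYPE('a)"
    and "C \<noteq> {}" and "closed C" and "convex C"
    and "representation_on C T"
    and "attractive_points C T \<noteq> {}"
  shows "common_fixed_points C T \<noteq> {}"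
proof -
  obtain a where a: "a \<in> attractive_points C T"
    using assms(7) by blast
  obtain z where z: "z \<in> C" "\<forall>c\<in>C. norm (a - z) \<le> norm (a - c)"
    using reflexive_space_nearest_point_exists[OF assms(2,4,5,3)] by blast
  have "T s z = z" for s
  proof (rule strictly_convex_space_nearest_point_unique[OF assms(1,5) z])
    show "T s z \<in> C"
      using assms(6) z(1) by (simp add: representation_on_def)
    show "norm (a - T s z) \<le> norm (a - z)"
      using a z(1) by (simp add: attractive_points_def)
  qed
  with z(1) show ?thesis
    by (auto simp: common_fixed_points_def)
qed

end
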